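(* For every solution $c$ of the fragmentation equation with initial condition $c_0\in D(m)$ (no condition on $h$ beyond those in the context), $$\lim_{t\to\infty}\int_{x_0}^\infty c(t,x)\,x\,dx=0\quad\text{for all }x_0>0.$$
   Context: Fix $\alpha>0$ and a Borel function $h\colon(0,1)\to[0,\infty)$ with $\int_0^1 h(r)r\,dr=1$. $m(dx)=x\,dx$ on $(0,\infty)$, $D(m)$ the set of nonnegative $f$ with $\int_0^\infty f(x)x\,dx=1$. The fragmentation equation is $\partial_t c(t,x)=\int_x^\infty \frac1y h(x/y)y^\alpha c(t,y)dy-x^\alpha c(t,x)$, $c(0,\cdot)=c_0$; the solution for $c_0\in D(m)$ is the mass-conserving one, i.e. $c(t,\cdot)$ is the density w.r.t. $m$ of the pure jump Markov process $Y(t)$ that in state $x$ waits an exponential time with mean $x^{-\alpha}$ and then jumps to $\theta x$ with $\theta$ independent with $P(\theta\le r)=\int_0^rh(z)z\,dz$, where $Y(0)$ has density $c_0$ w.r.t. $m$. *)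

theory Defs
  imports "HOL-Probability.Probability"
begin

text \<open>Explicit (jump-chain) construction of the pure jump Markov process Y.
  Y0 is the initial state, E k are i.i.d. standard exponential clocks, Theta k are the
  i.i.d. fragmentation ratios. The embedded chain is X k = Y0 * Theta 0 * ... * Theta (k-1);
  the holding time in state X k is E k / (X k) powr alpha (exponential with mean (X k) powr (-alpha));
  T n is the n-th jump time.\<close>

definition frag_X :: "('a \<Rightarrow> real) \<Rightarrow> (nat \<Rightarrow> 'a \<Rightarrow> real) \<Rightarrow> nat \<Rightarrow> 'a \<Rightarrow> real" where
  "frag_X Y0 Theta k \<omega> = Y0 \<omega> * (\<Prod>j<k. Theta j \<omega>)"

definition frag_T :: "real \<Rightarrow> ('a \<Rightarrow> real) \<Rightarrow> (nat \<Rightarrow> 'a \<Rightarrow> real) \<Rightarrow> (nat \<Rightarrow> 'a \<Rightarrow> real)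
    \<Rightarrow> nat \<Rightarrow> 'a \<Rightarrow> real" where
  "frag_T \<alpha> Y0 E Theta n \<omega> = (\<Sum>k<n. E k \<omega> / (frag_X Y0 Theta k \<omega>) powr \<alpha>)"

text \<open>Value of the process at time t (set to 0 off the almost-sure event where it is defined).\<close>
definition frag_Y :: "real \<Rightarrow> ('a \<Rightarrow> real) \<Rightarrow> (nat \<Rightarrow> 'a \<Rightarrow> real) \<Rightarrow> (nat \<Rightarrow> 'a \<Rightarrow> real)
    \<Rightarrow> real \<Rightarrow> 'a \<Rightarrow> real" where
  "frag_Y \<alpha> Y0 E Theta t \<omega> =
     (if 0 \<le> t \<and> (\<exists>n. t < frag_T \<alpha> Y0 E Theta (Suc n) \<omega>)
      then frag_X Y0 Theta (LEAST n. t < frag_T \<alpha> Y0 E Theta (Suc n) \<omega>) \<omega>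
      else 0)"

definition frag_family :: "('a \<Rightarrow> real) \<Rightarrow> (nat \<Rightarrow> 'a \<Rightarrow> real) \<Rightarrow> (nat \<Rightarrow> 'a \<Rightarrow> real)
    \<Rightarrow> unit + (nat + nat) \<Rightarrow> 'a \<Rightarrow> real" where
  "frag_family Y0 E Theta i = (case i of Inl _ \<Rightarrow> Y0 | Inr (Inl k) \<Rightarrow> E k | Inr (Inr k) \<Rightarrow> Theta k)"

end

theory Submission imports Defs begin

text \<open>
  Fragments only shrink, so if the process is at least x0 at time t, then for every N either the
  N-th jump has not yet happened at time t, or the size after N jumps is still at least x0.
  For fixed N the first event has vanishing probability as t \<rightarrow> \<infinity>, the N-th jump time being a
  real random variable. The size after N jumps is Y0 \<Theta>0 \<cdots> \<Theta>(N-1), whose second factor has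
  mean \<mu>^N with \<mu> = E \<Theta> < 1 by independence; Markov's inequality together with the tightness
  of Y0 makes the second event unlikely for large N.
  Neither \<alpha> > 0 nor any property of h beyond \<Theta> \<in> (0,1) a.s. is needed.
\<close>

lemma (in prob_space) prob_gt_tendsto_0:
  fixes X :: "'a \<Rightarrow> real"
  assumes X[measurable]: "X \<in> borel_measurable M"
  shows "((\<lambda>t. prob {\<omega>\<in>space M. t < X \<omega>}) \<longlongrightarrow> 0) at_top"
proof -
  interpret D: real_distribution "distr M borel X" using X by simp
  have prob_eq: "prob {\<omega>\<in>space M. t < X \<omega>} = 1 - cdf (distr M borel X) t" for t
  proof -
    have "cdf (distr M borel X) t = prob (X -` {..t} \<inter> space M)"
      unfolding cdf_def by (simp add: measure_distr)
    moreover have "{\<omega>\<in>space M. t < X \<omega>} = space M - (X -` {..t} \<inter> space M)" by auto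
    moreover have "X -` {..t} \<inter> space M \<in> events" by measurable
    ultimately show ?thesis by (simp add: prob_compl)
  qed
  have "((\<lambda>t. 1 - cdf (distr M borel X) t) \<longlongrightarrow> 1 - 1) at_top"
    by (intro tendsto_intros D.cdf_lim_at_top_prob)
  then show ?thesis by (simp add: prob_eq)
qed

lemma tendsto_0_by_vanishing_bounds:
  fixes f :: "'a \<Rightarrow> real" and a :: "'k \<Rightarrow> real" and b :: "'k \<Rightarrow> 'a \<Rightarrow> real"
  assumes G: "G \<noteq> bot" and f_nonneg: "\<And>x. 0 \<le> f x"
    and bound: "\<forall>\<^sub>F k in G. \<forall>x. f x \<le> a k + b k x"
    and a: "(a \<longlongrightarrow> 0) G" and b: "\<And>k. (b k \<longlongrightarrow> 0) F"
  shows "(f \<longlongrightarrow> 0) F"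
proof (rule tendstoI)
  fix e :: real assume e: "0 < e"
  have "\<forall>\<^sub>F k in G. (\<forall>x. f x \<le> a k + b k x) \<and> dist (a k) 0 < e/2"
    using bound tendstoD[OF a, of "e/2"] e by (auto intro: eventually_conj)
  then obtain k where k: "\<forall>x. f x \<le> a k + b k x" "dist (a k) 0 < e/2"
    using G by (auto dest: eventually_happens)
  have "\<forall>\<^sub>F x in F. dist (b k x) 0 < e/2" using tendstoD[OF b, of "e/2"] e by auto
  then show "\<forall>\<^sub>F x in F. dist (f x) 0 < e"
  proof (rule eventually_mono)
    fix x assume "dist (b k x) 0 < e/2"
    with k(2) f_nonneg[of x] k(1)[rule_format, of x] show "dist (f x) 0 < e"
      by (simp add: dist_real_def)
  qed
qed

lemma (in prob_space) expectation_less_1: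
  fixes X :: "'a \<Rightarrow> real"
  assumes "integrable M X" and "AE \<omega> in M. X \<omega> < 1"
  shows "expectation X < 1"
  using integral_less_AE_space[of X "\<lambda>_. 1"] assms by (simp add: prob_space emeasure_space_1)

lemma (in prob_space) indep_vars_expectation_prod_reindex:
  fixes X :: "'i \<Rightarrow> 'a \<Rightarrow> real"
  assumes indep: "indep_vars (\<lambda>_. borel) X I"
    and g: "inj_on g J" "g ` J \<subseteq> I" and J: "finite J"
    and int: "\<And>j. j \<in> J \<Longrightarrow> integrable M (X (g j))"
  shows "expectation (\<lambda>\<omega>. \<Prod>j\<in>J. X (g j) \<omega>) = (\<Prod>j\<in>J. expectation (X (g j)))"
    and "integrable M (\<lambda>\<omega>. \<Prod>j\<in>J. X (g j) \<omega>)"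
proof -
  have indep': "indep_vars (\<lambda>_. borel) X (g ` J)"
    using indep g(2) by (rule indep_vars_subset)
  have int': "\<And>i. i \<in> g ` J \<Longrightarrow> integrable M (X i)" using int by auto
  show "expectation (\<lambda>\<omega>. \<Prod>j\<in>J. X (g j) \<omega>) = (\<Prod>j\<in>J. expectation (X (g j)))"
    using indep_vars_lebesgue_integral[OF _ indep' int'] J by (simp add: prod.reindex[OF g(1)])
  show "integrable M (\<lambda>\<omega>. \<Prod>j\<in>J. X (g j) \<omega>)"
    using indep_vars_integrable[OF _ indep' int'] J by (simp add: prod.reindex[OF g(1)])
qed

lemma (in prob_space) prob_mult_ge_le:
  fixes Y Z :: "'a \<Rightarrow> real"
  assumes [measurable]: "Y \<in> borel_measurable M"
    and Z_int: "integrable M Z" and Z_nonneg: "AE \<omega> in M. 0 \<le> Z \<omega>"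
    and a: "0 < a" and K: "0 < K"
  shows "prob {\<omega>\<in>space M. a \<le> Y \<omega> * Z \<omega>} \<le> prob {\<omega>\<in>space M. K < Y \<omega>} + expectation Z * K / a"
proof -
  have [measurable]: "Z \<in> borel_measurable M" using Z_int by blast
  have "prob {\<omega>\<in>space M. a \<le> Y \<omega> * Z \<omega>}
      \<le> prob ({\<omega>\<in>space M. K < Y \<omega>} \<union> {\<omega>\<in>space M. a / K \<le> Z \<omega>})"
  proof (rule finite_measure_mono_AE)
    show "AE \<omega> in M. \<omega> \<in> {\<omega>\<in>space M. a \<le> Y \<omega> * Z \<omega>} \<longrightarrow>
        \<omega> \<in> {\<omega>\<in>space M. K < Y \<omega>} \<union> {\<omega>\<in>space M. a / K \<le> Z \<omega>}"
      using Z_nonneg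
    proof eventually_elim
      case (elim \<omega>)
      show ?case
      proof (cases "K < Y \<omega>")
        case False
        then have "Y \<omega> * Z \<omega> \<le> K * Z \<omega>"
          using elim by (intro mult_right_mono) auto
        then show ?thesis using K by (auto simp: divide_le_eq mult.commute)
      qed simp
    qed
  qed measurable
  also have "\<dots> \<le> prob {\<omega>\<in>space M. K < Y \<omega>} + prob {\<omega>\<in>space M. a / K \<le> Z \<omega>}"
    by (rule measure_Un_le) measurable
  also have "\<dots> \<le> prob {\<omega>\<in>space M. K < Y \<omega>} + expectation Z * K / a"
    using integral_Markov_inequality_measure[OF Z_int sets.top Z_nonneg, of "a / K"] K a by simp
  finally show ?thesis .
qed

lemma (in prob_space) prob_mult_ge_tendsto_0:
  fixes Y :: "'a \<Rightarrow> real" and Z :: "nat \<Rightarrow> 'a \<Rightarrow> real"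
  assumes Y[measurable]: "Y \<in> borel_measurable M"
    and Z_int: "\<And>N. integrable M (Z N)" and Z_nonneg: "\<And>N. AE \<omega> in M. 0 \<le> Z N \<omega>"
    and Z_mean: "(\<lambda>N. expectation (Z N)) \<longlonglongrightarrow> 0" and a: "0 < a"
  shows "(\<lambda>N. prob {\<omega>\<in>space M. a \<le> Y \<omega> * Z N \<omega>}) \<longlonglongrightarrow> 0"
proof (rule tendsto_0_by_vanishing_bounds[where G=at_top
      and a="\<lambda>K. prob {\<omega>\<in>space M. K < Y \<omega>}" and b="\<lambda>K N. expectation (Z N) * K / a"])
  show "\<forall>\<^sub>F K in at_top. \<forall>N. prob {\<omega>\<in>space M. a \<le> Y \<omega> * Z N \<omega>}
      \<le> prob {\<omega>\<in>space M. K < Y \<omega>} + expectation (Z N) * K / a"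
    using eventually_gt_at_top[of "0::real"]
    by eventually_elim (use prob_mult_ge_le[OF Y Z_int Z_nonneg a] in blast)
  show "((\<lambda>K. prob {\<omega>\<in>space M. K < Y \<omega>}) \<longlongrightarrow> 0) at_top"
    by (rule prob_gt_tendsto_0) measurable
  show "(\<lambda>N. expectation (Z N) * K / a) \<longlonglongrightarrow> 0" for K
    using tendsto_divide_zero[OF tendsto_mult_left_zero[OF Z_mean, of K]] by (simp add: mult.commute)
qed auto

lemma frag_X_nonneg:
  assumes "0 \<le> Y0 \<omega>" and "\<forall>j. 0 \<le> Theta j \<omega>"
  shows "0 \<le> frag_X Y0 Theta n \<omega>"
  using assms by (simp add: frag_X_def prod_nonneg)

lemma frag_X_antimono:
  assumes Y0: "0 \<le> Y0 \<omega>" and Theta: "\<forall>j. 0 \<le> Theta j \<omega> \<and> Theta j \<omega> \<le> 1" and "m \<le> n"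
  shows "frag_X Y0 Theta n \<omega> \<le> frag_X Y0 Theta m \<omega>"
  using \<open>m \<le> n\<close>
proof (induction n rule: dec_induct)
  case (step n)
  have "frag_X Y0 Theta (Suc n) \<omega> = frag_X Y0 Theta n \<omega> * Theta n \<omega>"
    by (simp add: frag_X_def)
  also have "\<dots> \<le> frag_X Y0 Theta n \<omega>"
    using frag_X_nonneg[of Y0 \<omega> Theta n] Y0 Theta by (intro mult_left_le) auto
  finally show ?case using step.IH by simp
qed simp

lemma frag_Y_ge_imp:
  assumes Y0: "0 \<le> Y0 \<omega>" and Theta: "\<forall>j. 0 \<le> Theta j \<omega> \<and> Theta j \<omega> \<le> 1"
    and E: "\<forall>k. 0 \<le> E k \<omega>" and x0: "0 < x0"
    and Y: "x0 \<le> frag_Y \<alpha> Y0 E Theta t \<omega>"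
  shows "x0 \<le> frag_X Y0 Theta N \<omega> \<or> t < frag_T \<alpha> Y0 E Theta N \<omega>"
proof -
  let ?P = "\<lambda>n. t < frag_T \<alpha> Y0 E Theta (Suc n) \<omega>"
  have ex: "\<exists>n. ?P n" and Y_eq: "frag_Y \<alpha> Y0 E Theta t \<omega> = frag_X Y0 Theta (LEAST n. ?P n) \<omega>"
    using Y x0 by (auto simp: frag_Y_def split: if_splits)
  define n where "n = (LEAST n. ?P n)"
  have Pn: "?P n" unfolding n_def using ex by (rule LeastI_ex)
  have Xn: "x0 \<le> frag_X Y0 Theta n \<omega>" using Y Y_eq n_def by simp
  show ?thesis
  proof (cases "N \<le> n")
    case True
    then show ?thesis using frag_X_antimono[of Y0 \<omega> Theta N n] Y0 Theta True Xn by auto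
  next
    case False
    have "frag_T \<alpha> Y0 E Theta (Suc n) \<omega> \<le> frag_T \<alpha> Y0 E Theta N \<omega>"
      unfolding frag_T_def by (rule sum_mono2) (use False E in auto)
    then show ?thesis using Pn by auto
  qed
qed

context prob_space
begin

lemma prob_frag_Y_ge_le:
  assumes [measurable]: "Y0 \<in> borel_measurable M" "\<And>k. E k \<in> borel_measurable M"
      "\<And>j. Theta j \<in> borel_measurable M"
    and AE_Y0: "AE \<omega> in M. 0 \<le> Y0 \<omega>" and AE_E: "AE \<omega> in M. \<forall>k. 0 \<le> E k \<omega>"
    and AE_Theta: "AE \<omega> in M. \<forall>j. 0 \<le> Theta j \<omega> \<and> Theta j \<omega> \<le> 1"
    and x0: "0 < x0"
  shows "prob {\<omega>\<in>space M. x0 \<le> frag_Y \<alpha> Y0 E Theta t \<omega>}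
      \<le> prob {\<omega>\<in>space M. x0 \<le> frag_X Y0 Theta N \<omega>}
        + prob {\<omega>\<in>space M. t < frag_T \<alpha> Y0 E Theta N \<omega>}"
proof -
  have [measurable]: "frag_X Y0 Theta N \<in> borel_measurable M" "frag_T \<alpha> Y0 E Theta N \<in> borel_measurable M"
    unfolding frag_X_def frag_T_def by measurable
  have "prob {\<omega>\<in>space M. x0 \<le> frag_Y \<alpha> Y0 E Theta t \<omega>}
      \<le> prob ({\<omega>\<in>space M. x0 \<le> frag_X Y0 Theta N \<omega>} \<union> {\<omega>\<in>space M. t < frag_T \<alpha> Y0 E Theta N \<omega>})"
  proof (rule finite_measure_mono_AE)
    show "AE \<omega> in M. \<omega> \<in> {\<omega>\<in>space M. x0 \<le> frag_Y \<alpha> Y0 E Theta t \<omega>} \<longrightarrow>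
        \<omega> \<in> {\<omega>\<in>space M. x0 \<le> frag_X Y0 Theta N \<omega>} \<union> {\<omega>\<in>space M. t < frag_T \<alpha> Y0 E Theta N \<omega>}"
      using AE_Y0 AE_Theta AE_E
    proof eventually_elim
      case (elim \<omega>)
      then show ?case using frag_Y_ge_imp[of Y0 \<omega> Theta E x0 \<alpha> t N] x0 by auto
    qed
  qed measurable
  also have "\<dots> \<le> prob {\<omega>\<in>space M. x0 \<le> frag_X Y0 Theta N \<omega>}
      + prob {\<omega>\<in>space M. t < frag_T \<alpha> Y0 E Theta N \<omega>}"
    by (rule measure_Un_le) measurable
  finally show ?thesis .
qed

lemma prob_frag_Y_ge_tendsto_0:
  assumes [measurable]: "Y0 \<in> borel_measurable M" "\<And>k. E k \<in> borel_measurable M"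
      "\<And>j. Theta j \<in> borel_measurable M"
    and AE_Y0: "AE \<omega> in M. 0 \<le> Y0 \<omega>" and AE_E: "AE \<omega> in M. \<forall>k. 0 \<le> E k \<omega>"
    and AE_Theta: "AE \<omega> in M. \<forall>j. 0 \<le> Theta j \<omega> \<and> Theta j \<omega> < 1"
    and indep: "indep_vars (\<lambda>_. borel) (frag_family Y0 E Theta) UNIV"
    and Theta_ident: "\<And>j. distr M lborel (Theta j) = distr M lborel (Theta 0)"
    and x0: "0 < x0"
  shows "((\<lambda>t. prob {\<omega>\<in>space M. x0 \<le> frag_Y \<alpha> Y0 E Theta t \<omega>}) \<longlongrightarrow> 0) at_top"
proof -
  define \<mu> where "\<mu> = expectation (Theta 0)"
  have Theta_int: "integrable M (Theta j)" for j
  proof (rule integrable_const_bound[where B=1])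
    show "AE \<omega> in M. norm (Theta j \<omega>) \<le> 1"
      using AE_Theta by eventually_elim (metis abs_of_nonneg less_imp_le real_norm_def)
  qed measurable
  have Theta_mean: "expectation (Theta j) = \<mu>" for j
  proof -
    have "expectation (Theta i) = integral\<^sup>L (distr M lborel (Theta i)) (\<lambda>x. x)" for i
      by (subst integral_distr) auto
    then show ?thesis unfolding \<mu>_def using Theta_ident[of j] by simp
  qed
  have \<mu>: "0 \<le> \<mu>" "\<mu> < 1" unfolding \<mu>_def
    using AE_Theta by (auto intro!: integral_nonneg_AE expectation_less_1 Theta_int elim!: eventually_mono)
  have prod_mean: "expectation (\<lambda>\<omega>. \<Prod>j<N. Theta j \<omega>) = \<mu> ^ N"
    and prod_int: "integrable M (\<lambda>\<omega>. \<Prod>j<N. Theta j \<omega>)" for N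
    using indep_vars_expectation_prod_reindex[OF indep, of "\<lambda>j. Inr (Inr j)" "{..<N}"] Theta_int
    by (auto simp: frag_family_def inj_on_def Theta_mean)
  have "(\<lambda>N. prob {\<omega>\<in>space M. x0 \<le> Y0 \<omega> * (\<Prod>j<N. Theta j \<omega>)}) \<longlonglongrightarrow> 0"
  proof (rule prob_mult_ge_tendsto_0)
    show "AE \<omega> in M. 0 \<le> (\<Prod>j<N. Theta j \<omega>)" for N
      using AE_Theta by eventually_elim (simp add: prod_nonneg)
    show "(\<lambda>N. expectation (\<lambda>\<omega>. \<Prod>j<N. Theta j \<omega>)) \<longlonglongrightarrow> 0"
      unfolding prod_mean using \<mu> by (intro LIMSEQ_power_zero) auto
  qed (use prod_int x0 in auto)
  then have X_lim: "(\<lambda>N. prob {\<omega>\<in>space M. x0 \<le> frag_X Y0 Theta N \<omega>}) \<longlonglongrightarrow> 0"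
    by (simp add: frag_X_def)
  have AE_Theta': "AE \<omega> in M. \<forall>j. 0 \<le> Theta j \<omega> \<and> Theta j \<omega> \<le> 1"
    using AE_Theta by (auto elim!: eventually_mono simp: less_imp_le)
  show ?thesis
  proof (rule tendsto_0_by_vanishing_bounds[where G=sequentially
        and a="\<lambda>N. prob {\<omega>\<in>space M. x0 \<le> frag_X Y0 Theta N \<omega>}"
        and b="\<lambda>N t. prob {\<omega>\<in>space M. t < frag_T \<alpha> Y0 E Theta N \<omega>}"])
    show "((\<lambda>t. prob {\<omega>\<in>space M. t < frag_T \<alpha> Y0 E Theta N \<omega>}) \<longlongrightarrow> 0) at_top" for N
      by (rule prob_gt_tendsto_0) (unfold frag_T_def frag_X_def, measurable)
  qed (use X_lim prob_frag_Y_ge_le[OF _ _ _ AE_Y0 AE_E AE_Theta' x0] in auto)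
qed

lemma set_integral_density_eq_prob_ge:
  fixes Y :: "'a \<Rightarrow> real" and f :: "real \<Rightarrow> real"
  assumes D: "distributed M lborel Y (\<lambda>x. ennreal (indicator {0<..} x * f x))"
    and f_nonneg: "\<And>x. 0 < x \<Longrightarrow> 0 \<le> f x" and a: "0 < a"
  shows "(LBINT x:{a..}. f x) = prob {\<omega>\<in>space M. a \<le> Y \<omega>}"
proof -
  define g where "g x = ennreal (indicator {0<..} x * f x)" for x
  have D': "distributed M lborel Y g"
    using D by (simp add: g_def[abs_def])
  have [measurable]: "g \<in> borel_measurable borel" "Y \<in> borel_measurable M"
    using D' by (simp_all add: distributed_def)
  have "(LBINT x:{a..}. f x) = integral\<^sup>L lborel (\<lambda>x. indicator {a..} x * enn2real (g x))"
    unfolding set_lebesgue_integral_def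
    by (intro Bochner_Integration.integral_cong) (use f_nonneg a in \<open>auto simp: g_def split: split_indicator\<close>)
  also have "\<dots> = enn2real (\<integral>\<^sup>+ x. ennreal (indicator {a..} x * enn2real (g x)) \<partial>lborel)"
    by (rule integral_eq_nn_integral) auto
  also have "(\<integral>\<^sup>+ x. ennreal (indicator {a..} x * enn2real (g x)) \<partial>lborel)
      = (\<integral>\<^sup>+ x. g x * indicator {a..} x \<partial>lborel)"
    by (intro nn_integral_cong) (auto simp: g_def split: split_indicator)
  also have "\<dots> = emeasure (density lborel g) {a..}"
    by (rule emeasure_density[symmetric]) auto
  also have "\<dots> = emeasure (distr M lborel Y) {a..}"
    using D' by (simp add: distributed_def)
  also have "\<dots> = emeasure M {\<omega>\<in>space M. a \<le> Y \<omega>}"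
    by (subst emeasure_distr) (auto intro!: arg_cong[where f="emeasure M"])
  finally show ?thesis by (simp add: measure_def)
qed

end

theorem mainTheorem9:
  fixes \<alpha> :: real and h :: "real \<Rightarrow> real" and c0 :: "real \<Rightarrow> real"
    and M :: "'a measure" and Y0 :: "'a \<Rightarrow> real"
    and E :: "nat \<Rightarrow> 'a \<Rightarrow> real" and Theta :: "nat \<Rightarrow> 'a \<Rightarrow> real"
    and c :: "real \<Rightarrow> real \<Rightarrow> real" and x0 :: real
  assumes alpha_pos: "0 < \<alpha>"
    and h_meas: "h \<in> borel_measurable borel"
    and h_nonneg: "\<forall>r\<in>{0<..<1}. 0 \<le> h r"
    and h_norm: "(\<integral>\<^sup>+ r. ennreal (indicator {0<..<1} r * h r * r) \<partial>lborel) = 1"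
    and c0_meas: "c0 \<in> borel_measurable borel"
    and c0_nonneg: "\<forall>x>0. 0 \<le> c0 x"
    and c0_mass: "(\<integral>\<^sup>+ x. ennreal (indicator {0<..} x * c0 x * x) \<partial>lborel) = 1"
    and M_prob: "prob_space M"
    and indep: "prob_space.indep_vars M (\<lambda>_. borel) (frag_family Y0 E Theta) UNIV"
    and Y0_distr: "distributed M lborel Y0 (\<lambda>x. ennreal (indicator {0<..} x * c0 x * x))"
    and E_distr: "\<And>k. distributed M lborel (E k) (exponential_density 1)"
    and Theta_distr: "\<And>k. distributed M lborel (Theta k) (\<lambda>z. ennreal (indicator {0<..<1} z * h z * z))"
    and c_nonneg: "\<forall>t\<ge>0. \<forall>x>0. 0 \<le> c t x"
    and c_density: "\<forall>t\<ge>0. distributed M lborel (frag_Y \<alpha> Y0 E Theta t)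
                        (\<lambda>x. ennreal (indicator {0<..} x * c t x * x))"
    and x0_pos: "0 < x0"
  shows "((\<lambda>t. LBINT x:{x0..}. c t x * x) \<longlongrightarrow> 0) at_top"
proof -
  interpret prob_space M by (rule M_prob)
  have "AE \<omega> in M. 0 \<le> Y0 \<omega>"
    using distributed_AE2[OF Y0_distr, of "\<lambda>x. 0 \<le> x"] by (auto split: split_indicator)
  moreover have "AE \<omega> in M. \<forall>k. 0 \<le> E k \<omega>"
    using distributed_AE2[OF E_distr, of "\<lambda>x. 0 \<le> x"]
    by (simp add: AE_all_countable exponential_density_def)
  moreover have "AE \<omega> in M. \<forall>j. 0 \<le> Theta j \<omega> \<and> Theta j \<omega> < 1"
    using distributed_AE2[OF Theta_distr, of "\<lambda>x. 0 \<le> x \<and> x < 1"]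
    by (auto simp: AE_all_countable split: split_indicator)
  moreover have "distr M lborel (Theta j) = distr M lborel (Theta 0)" for j
    using Theta_distr[of j] Theta_distr[of 0] by (simp add: distributed_def)
  ultimately have "((\<lambda>t. prob {\<omega>\<in>space M. x0 \<le> frag_Y \<alpha> Y0 E Theta t \<omega>}) \<longlongrightarrow> 0) at_top"
    using distributed_measurable[OF Y0_distr] distributed_measurable[OF E_distr]
      distributed_measurable[OF Theta_distr] indep x0_pos
    by (intro prob_frag_Y_ge_tendsto_0) auto
  moreover have "\<forall>\<^sub>F t in at_top. prob {\<omega>\<in>space M. x0 \<le> frag_Y \<alpha> Y0 E Theta t \<omega>}
      = (LBINT x:{x0..}. c t x * x)"
    using eventually_ge_at_top[of "0::real"]
  proof eventually_elim
    case (elim t)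
    then show ?case using c_density c_nonneg x0_pos
      by (intro set_integral_density_eq_prob_ge[symmetric]) (auto simp: mult.assoc)
  qed
  ultimately show ?thesis by (rule Lim_transform_eventually)
qed

end
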